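(* Let $A$ be a finite alphabet, $k \ge 1$, and let $f, g : A^* \to \mathbb{N}$ be $k$-repetitive. Then $f+g$ and the Hadamard product $f \cdot g$ (defined by $(f\cdot g)(w) = f(w)g(w)$) are $k$-repetitive.
   Context: For $k \ge 1$, a function $f : A^* \to \mathbb{N}$ is $k$-repetitive if there exists an integer $\omega_0 \ge 1$ such that for all words $\alpha, \beta, \alpha_0, u_1, \alpha_1, \dots, u_k, \alpha_k \in A^*$ and every positive multiple $\omega$ of $\omega_0$, setting $W(Z_1,\dots,Z_k) = \alpha_0 \prod_{i=1}^k u_i^{\omega Z_i} \alpha_i$ and $w = W(1,\dots,1)$, there exists a function $F : \mathbb{N}^k \to \mathbb{N}$ such that for all integers $X_1,\dots,X_k,Y_1,\dots,Y_k \ge 3$, $f(\alpha\, w^{2\omega-1} W(X_1,\dots,X_k)\, w^{\omega-1}\, W(Y_1,\dots,Y_k)\, w^{\omega}\, \beta) = F(X_1+Y_1, \dots, X_k+Y_k)$. *)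

theory Defs
  imports Main
begin

definition wpow :: "'a list \<Rightarrow> nat \<Rightarrow> 'a list" where
  "wpow u n = concat (replicate n u)"

text \<open>W(Z_1,...,Z_k) = alpha_0 u_1^(omega Z_1) alpha_1 ... u_k^(omega Z_k) alpha_k,
  with alpha_i = as i (i = 0..k), u_i = us i (i = 1..k), Z_i = Z i.\<close>

definition Wword :: "nat \<Rightarrow> nat \<Rightarrow> (nat \<Rightarrow> 'a list) \<Rightarrow> (nat \<Rightarrow> 'a list)
     \<Rightarrow> (nat \<Rightarrow> nat) \<Rightarrow> 'a list" where
  "Wword k \<omega> as us Z = as 0 @ concat (map (\<lambda>i. wpow (us i) (\<omega> * Z i) @ as i) [1..<k+1])"

definition k_repetitive :: "nat \<Rightarrow> ('a list \<Rightarrow> nat) \<Rightarrow> bool" where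
  "k_repetitive k f \<longleftrightarrow>
     (\<exists>\<omega>0::nat. \<omega>0 \<ge> 1 \<and>
       (\<forall>(\<alpha>::'a list) (\<beta>::'a list) (as::nat \<Rightarrow> 'a list) (us::nat \<Rightarrow> 'a list) (\<omega>::nat).
          (\<omega> > 0 \<and> \<omega>0 dvd \<omega>) \<longrightarrow>
          (let w = Wword k \<omega> as us (\<lambda>_. 1) in
           \<exists>F :: nat list \<Rightarrow> nat.
             \<forall>X Y :: nat \<Rightarrow> nat. (\<forall>i\<in>{1..k}. X i \<ge> 3 \<and> Y i \<ge> 3) \<longrightarrow>
               f (\<alpha> @ wpow w (2*\<omega> - 1) @ Wword k \<omega> as us X @ wpow w (\<omega> - 1)
                    @ Wword k \<omega> as us Y @ wpow w \<omega> @ \<beta>)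
               = F (map (\<lambda>i. X i + Y i) [1..<k+1]))))"

end

theory Submission
  imports Defs
begin

(* For a fixed admissible \<omega>, repetitiveness says that the value on the pumped word depends
   only on the sums X i + Y i. This survives any pointwise combination h (f w) (g w), and every
   multiple of the product of the two periods is a multiple of each of them. *)

definition sum_determined :: "nat \<Rightarrow> ((nat \<Rightarrow> nat) \<Rightarrow> (nat \<Rightarrow> nat) \<Rightarrow> 'b) \<Rightarrow> bool" where
  "sum_determined k \<phi> \<longleftrightarrow>
     (\<exists>F. \<forall>X Y. (\<forall>i\<in>{1..k}. X i \<ge> 3 \<and> Y i \<ge> 3) \<longrightarrow> \<phi> X Y = F (map (\<lambda>i. X i + Y i) [1..<k+1]))"

definition pumped_word :: "nat \<Rightarrow> nat \<Rightarrow> 'a list \<Rightarrow> 'a list \<Rightarrow> (nat \<Rightarrow> 'a list) \<Rightarrow> (nat \<Rightarrow> 'a list)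
    \<Rightarrow> (nat \<Rightarrow> nat) \<Rightarrow> (nat \<Rightarrow> nat) \<Rightarrow> 'a list" where
  "pumped_word k \<omega> \<alpha> \<beta> as us X Y =
     (let w = Wword k \<omega> as us (\<lambda>_. 1) in
      \<alpha> @ wpow w (2*\<omega> - 1) @ Wword k \<omega> as us X @ wpow w (\<omega> - 1) @ Wword k \<omega> as us Y @ wpow w \<omega> @ \<beta>)"

lemma k_repetitive_iff:
  "k_repetitive k f \<longleftrightarrow>
     (\<exists>\<omega>0\<ge>1. \<forall>\<alpha> \<beta> as us \<omega>. 0 < \<omega> \<and> \<omega>0 dvd \<omega> \<longrightarrow>
        sum_determined k (\<lambda>X Y. f (pumped_word k \<omega> \<alpha> \<beta> as us X Y)))"
  by (simp add: k_repetitive_def sum_determined_def pumped_word_def Let_def)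

lemma sum_determined_combine:
  assumes "sum_determined k \<phi>" and "sum_determined k \<psi>"
  shows "sum_determined k (\<lambda>X Y. h (\<phi> X Y) (\<psi> X Y))"
proof -
  obtain F G where
    "\<forall>X Y. (\<forall>i\<in>{1..k}. X i \<ge> 3 \<and> Y i \<ge> 3) \<longrightarrow> \<phi> X Y = F (map (\<lambda>i. X i + Y i) [1..<k+1])" and
    "\<forall>X Y. (\<forall>i\<in>{1..k}. X i \<ge> 3 \<and> Y i \<ge> 3) \<longrightarrow> \<psi> X Y = G (map (\<lambda>i. X i + Y i) [1..<k+1])"
    using assms unfolding sum_determined_def by blast
  then show ?thesis
    unfolding sum_determined_def by (intro exI[of _ "\<lambda>s. h (F s) (G s)"]) simp
qed

lemma k_repetitive_combine:
  assumes "k_repetitive k f" and "k_repetitive k g"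
  shows "k_repetitive k (\<lambda>w. h (f w) (g w))"
proof -
  obtain a where "a \<ge> 1" and f_rep: "\<forall>\<alpha> \<beta> as us \<omega>. 0 < \<omega> \<and> a dvd \<omega> \<longrightarrow>
      sum_determined k (\<lambda>X Y. f (pumped_word k \<omega> \<alpha> \<beta> as us X Y))"
    using assms(1) unfolding k_repetitive_iff by blast
  obtain b where "b \<ge> 1" and g_rep: "\<forall>\<alpha> \<beta> as us \<omega>. 0 < \<omega> \<and> b dvd \<omega> \<longrightarrow>
      sum_determined k (\<lambda>X Y. g (pumped_word k \<omega> \<alpha> \<beta> as us X Y))"
    using assms(2) unfolding k_repetitive_iff by blast
  show ?thesis
    unfolding k_repetitive_iff
  proof (intro exI[of _ "a * b"] conjI allI impI)
    show "1 \<le> a * b"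
      using \<open>a \<ge> 1\<close> \<open>b \<ge> 1\<close> by simp
    fix \<alpha> \<beta> :: "'a list" and as us :: "nat \<Rightarrow> 'a list" and \<omega> :: nat
    assume "0 < \<omega> \<and> a * b dvd \<omega>"
    then have "0 < \<omega> \<and> a dvd \<omega>" and "0 < \<omega> \<and> b dvd \<omega>"
      using dvd_mult_left dvd_mult_right by blast+
    let ?p = "pumped_word k \<omega> \<alpha> \<beta> as us"
    have "sum_determined k (\<lambda>X Y. f (?p X Y))" and "sum_determined k (\<lambda>X Y. g (?p X Y))"
      using f_rep g_rep \<open>0 < \<omega> \<and> a dvd \<omega>\<close> \<open>0 < \<omega> \<and> b dvd \<omega>\<close> by blast+
    then show "sum_determined k (\<lambda>X Y. h (f (?p X Y)) (g (?p X Y)))"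
      by (rule sum_determined_combine)
  qed
qed

theorem mainTheorem3:
  fixes f g :: "('a::finite) list \<Rightarrow> nat" and k :: nat
  assumes "k \<ge> 1" and "k_repetitive k f" and "k_repetitive k g"
  shows "k_repetitive k (\<lambda>w. f w + g w) \<and> k_repetitive k (\<lambda>w. f w * g w)"
  using k_repetitive_combine[OF assms(2,3), of "(+)"] k_repetitive_combine[OF assms(2,3), of "(*)"]
  by simp

end
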